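(* Let $f:\mathbb{Z}_+^E\to\mathbb{R}_{\ge0}$ be non-negative and DR-submodular, $k$ a positive integer and $\alpha\in(0,1)$. Let $\mathbf{x},\mathbf{y}$ be the two vectors held by Algorithm FastDrSub$(f,E,k,\alpha)$ at the end of its main loop (step 3, before trimming). Let $\mathbf{o}$ be an optimal solution of the DrSMC problem and let $\mathbf{o}_1\in\mathbb{Z}_+^E$ be defined by $\mathbf{o}_1(e)=\mathbf{o}(e)$ if $\mathbf{o}(e)\le\alpha k$ and $\mathbf{o}_1(e)=0$ otherwise. Then $$f(\mathbf{o}_1\vee\mathbf{x})+f(\mathbf{o}_1\vee\mathbf{y})\le 4\big(f(\mathbf{x})+f(\mathbf{y})\big).$$
   Context: Notation: $E$ is a finite ground set of size $n$; $\mathbf{1}_e$ is the $e$-th unit vector; $\mathbf{x}\le\mathbf{y}$ is coordinatewise; $\vee,\wedge$ are coordinatewise max/min; $\|\mathbf{x}\|_1=\sum_{e}\mathbf{x}(e)$; $f(\mathbf{a}\mid\mathbf{b}):=f(\mathbf{a}+\mathbf{b})-f(\mathbf{b})$. $f$ is DR-submodular if $f(\mathbf{x}+\mathbf{1}_e)-f(\mathbf{x})\ge f(\mathbf{y}+\mathbf{1}_e)-f(\mathbf{y})$ for all $\mathbf{x}\le\mathbf{y}$ and $e\in E$. DrSMC problem: maximize $f(\mathbf{x})$ over $\mathbf{x}\in\mathbb{Z}_+^E$ subject to $\|\mathbf{x}\|_1\le k$ and $\mathbf{0}\le\mathbf{x}\le k\cdot\mathbf{1}$; $\mathsf{opt}$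 denotes its optimal value. Algorithm FastDrSub$(f,E,k,\alpha)$ (elements of $E$ are processed in a fixed order): 1. Compute $(d_{\max},e_{\max})\in\arg\max\{f(d\mathbf{1}_e): e\in E,\ d\in\mathbb{Z},\ \alpha k<d\le k\}$. 2. Set $\mathbf{x}\leftarrow\mathbf{0}$, $\mathbf{y}\leftarrow\mathbf{0}$. 3. For each $e\in E$ in order: let $d_{(\mathbf{x},e)}=\max\{d\in\mathbb{Z}: 0<d\le\alpha k,\ f(\mathbf{1}_e\mid\mathbf{x}+(d-1)\mathbf{1}_e)\ge f(\mathbf{x})/k\}$ and $d_{(\mathbf{y},e)}=\max\{d\in\mathbb{Z}: 0<d\le\alpha k,\ f(\mathbf{1}_e\mid\mathbf{y}+(d-1)\mathbf{1}_e)\ge f(\mathbf{y})/k\}$ (each computed by binary search on $d$, and taken to be $0$ if the set is empty). If $f(d_{(\mathbf{x},e)}\mathbf{1}_e\mid\mathbf{x})\ge f(d_{(\mathbf{y},e)}\mathbf{1}_e\mid\mathbf{y})$, set $\mathbf{x}\leftarrow\mathbf{x}+d_{(\mathbf{x},e)}\mathbf{1}_e$; otherwise set $\mathbf{y}\leftarrow\mathbf{y}+d_{(\mathbf{y},e)}\mathbf{1}_e$. 4. (Trimming) Let $e_1,e_2,\dots$ be the elements of $\{e:\mathbf{x}(e)>0\}$ listed in reverse order of their addition to $\mathbf{x}$ (most recent first) and $\mathbf{x}_t=\sum_{i=1}^t\mathbf{x}(e_i)\mathbf{1}_{e_i}$; let $\mathbf{x}'=\mathbf{x}_t$ for the largest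 $t$ with $\|\mathbf{x}_t\|_1\le k$. Define $\mathbf{y}'$ from $\mathbf{y}$ in the same way. 5. Return $\mathbf{z}\in\arg\max\{f(\mathbf{t}):\mathbf{t}\in\{\mathbf{x}',\mathbf{y}',d_{\max}\mathbf{1}_{e_{\max}}\}\}$. *)

theory Defs
  imports Complex_Main
begin

text \<open>Vectors in Z_+^E are functions 'a => nat that vanish outside E.\<close>

definition supp_in :: "'a set \<Rightarrow> ('a \<Rightarrow> nat) \<Rightarrow> bool" where
  "supp_in E x \<longleftrightarrow> (\<forall>a. a \<notin> E \<longrightarrow> x a = 0)"

definition incr :: "('a \<Rightarrow> nat) \<Rightarrow> 'a \<Rightarrow> nat \<Rightarrow> ('a \<Rightarrow> nat)" where
  "incr x e d = x(e := x e + d)"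

definition nonneg_on :: "'a set \<Rightarrow> (('a \<Rightarrow> nat) \<Rightarrow> real) \<Rightarrow> bool" where
  "nonneg_on E f \<longleftrightarrow> (\<forall>x. supp_in E x \<longrightarrow> 0 \<le> f x)"

definition dr_submodular :: "'a set \<Rightarrow> (('a \<Rightarrow> nat) \<Rightarrow> real) \<Rightarrow> bool" where
  "dr_submodular E f \<longleftrightarrow>
     (\<forall>x y e. supp_in E x \<longrightarrow> supp_in E y \<longrightarrow> x \<le> y \<longrightarrow> e \<in> E \<longrightarrow>
        f (incr x e 1) - f x \<ge> f (incr y e 1) - f y)"

definition feasible :: "'a set \<Rightarrow> nat \<Rightarrow> ('a \<Rightarrow> nat) \<Rightarrow> bool" where
  "feasible E k x \<longleftrightarrow> supp_in E x \<and> (\<Sum>e\<in>E. x e) \<le> k \<and> (\<forall>e. x e \<le> k)"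

definition is_opt :: "'a set \<Rightarrow> (('a \<Rightarrow> nat) \<Rightarrow> real) \<Rightarrow> nat \<Rightarrow> ('a \<Rightarrow> nat) \<Rightarrow> bool" where
  "is_opt E f k ov \<longleftrightarrow> feasible E k ov \<and> (\<forall>t. feasible E k t \<longrightarrow> f t \<le> f ov)"

definition dsel :: "(('a \<Rightarrow> nat) \<Rightarrow> real) \<Rightarrow> nat \<Rightarrow> real \<Rightarrow> ('a \<Rightarrow> nat) \<Rightarrow> 'a \<Rightarrow> nat" where
  "dsel f k \<alpha> x e =
     (let S = {d::nat. 0 < d \<and> real d \<le> \<alpha> * real k \<and>
                f (incr x e d) - f (incr x e (d - 1)) \<ge> f x / real k}
      in if S = {} then 0 else Max S)"

definition fds_step :: "(('a \<Rightarrow> nat) \<Rightarrow> real) \<Rightarrow> nat \<Rightarrow> real \<Rightarrow> 'a \<Rightarrow>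
    ('a \<Rightarrow> nat) \<times> ('a \<Rightarrow> nat) \<Rightarrow> ('a \<Rightarrow> nat) \<times> ('a \<Rightarrow> nat)" where
  "fds_step f k \<alpha> e p =
     (let x = fst p; y = snd p; dx = dsel f k \<alpha> x e; dy = dsel f k \<alpha> y e in
      if f (incr x e dx) - f x \<ge> f (incr y e dy) - f y
      then (incr x e dx, y) else (x, incr y e dy))"

text \<open>The pair (x, y) at the end of the main loop, elements processed in the order of the list es.\<close>
definition fds_main :: "(('a \<Rightarrow> nat) \<Rightarrow> real) \<Rightarrow> 'a list \<Rightarrow> nat \<Rightarrow> real \<Rightarrow>
    ('a \<Rightarrow> nat) \<times> ('a \<Rightarrow> nat)" where
  "fds_main f es k \<alpha> = fold (fds_step f k \<alpha>) es (\<lambda>_. 0, \<lambda>_. 0)"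

definition vjoin :: "('a \<Rightarrow> nat) \<Rightarrow> ('a \<Rightarrow> nat) \<Rightarrow> ('a \<Rightarrow> nat)" where
  "vjoin u v = (\<lambda>a. max (u a) (v a))"

end

theory Submission
  imports Defs
begin

(* By DR-submodularity, f(o1 \<or> x) - f(x) is at most the sum over e of the gains obtained
   by raising x(e) alone to o1(e).  If e was given to x, in d units, then by maximality of d
   and DR every further unit has marginal gain below f(x_e)/k <= f(x)/k, where x_e is x just
   before e was processed.  If e was given to y, the first min(o1(e), d) units gain at x at
   most what x would have gained by taking e, which by the greedy choice is at most what y
   actually gained at that step; the remaining units again gain less than f(x)/k each.
   Since the entries of o1 sum to at most k and the gains of y telescope, this yields
   f(o1 \<or> x) - f(x) <= f(x) + f(y) - f(0), and symmetrically for y; hence even the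
   bound 3 (f(x) + f(y)) holds. *)

lemma incr_incr [simp]: "incr (incr x e a) e b = incr x e (a + b)"
  by (simp add: incr_def fun_eq_iff)

lemma incr_0 [simp]: "incr x e 0 = x"
  by (simp add: incr_def)

lemma supp_in_incr: "supp_in E x \<Longrightarrow> e \<in> E \<Longrightarrow> supp_in E (incr x e d)"
  by (auto simp: supp_in_def incr_def)

lemma incr_apply_other [simp]: "a \<noteq> e \<Longrightarrow> incr x e d a = x a"
  by (simp add: incr_def)

lemma incr_apply_same [simp]: "incr x e d e = x e + d"
  by (simp add: incr_def)

lemma incr_mono: "x \<le> y \<Longrightarrow> incr x e d \<le> incr y e d"
  by (auto simp: le_fun_def incr_def)

lemma le_incr: "x \<le> incr x e d"
  by (auto simp: le_fun_def incr_def)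

lemma diff_le_of_increments_le:
  fixes g :: "nat \<Rightarrow> real"
  assumes "a \<le> b" "\<And>j. a \<le> j \<Longrightarrow> j < b \<Longrightarrow> g (Suc j) - g j \<le> c"
  shows "g b - g a \<le> real (b - a) * c"
proof -
  have "g b - g a = (\<Sum>j = a..<b. g (Suc j) - g j)"
    using assms(1) by (simp add: sum_Suc_diff')
  also have "\<dots> \<le> real (card {a..<b}) * c"
    by (rule sum_bounded_above) (use assms(2) in auto)
  finally show ?thesis by simp
qed

lemma diff_ge_of_increments_ge:
  fixes g :: "nat \<Rightarrow> real"
  assumes "a \<le> b" "\<And>j. a \<le> j \<Longrightarrow> j < b \<Longrightarrow> c \<le> g (Suc j) - g j"
  shows "real (b - a) * c \<le> g b - g a"
proof -
  have "real (card {a..<b}) * c \<le> (\<Sum>j = a..<b. g (Suc j) - g j)"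
    by (rule sum_bounded_below) (use assms(2) in auto)
  also have "\<dots> = g b - g a"
    using assms(1) by (simp add: sum_Suc_diff')
  finally show ?thesis by simp
qed

lemma dsel_candidates_finite:
  "finite {d::nat. 0 < d \<and> real d \<le> r \<and> P d}"
proof (rule finite_subset)
  show "{d::nat. 0 < d \<and> real d \<le> r \<and> P d} \<subseteq> {..nat \<lfloor>r\<rfloor>}"
    by (auto simp: le_nat_iff le_floor_iff)
qed simp

lemma dsel_maximal:
  assumes "0 < j" "real j \<le> \<alpha> * real k"
    and "f u / real k \<le> f (incr u e j) - f (incr u e (j - 1))"
  shows "j \<le> dsel f k \<alpha> u e"
  using assms dsel_candidates_finite[of "\<alpha> * real k"] unfolding dsel_def Let_def
  by (auto intro: Max_ge)

lemma dsel_marginal: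
  assumes "0 < dsel f k \<alpha> u e"
  shows "f u / real k \<le> f (incr u e (dsel f k \<alpha> u e)) - f (incr u e (dsel f k \<alpha> u e - 1))"
proof -
  let ?S = "{d::nat. 0 < d \<and> real d \<le> \<alpha> * real k \<and>
              f u / real k \<le> f (incr u e d) - f (incr u e (d - 1))}"
  have "?S \<noteq> {}" "dsel f k \<alpha> u e = Max ?S"
    using assms unfolding dsel_def Let_def by (auto split: if_splits)
  moreover have "Max ?S \<in> ?S"
    by (rule Max_in[OF dsel_candidates_finite \<open>?S \<noteq> {}\<close>])
  ultimately show ?thesis by simp
qed

definition raised :: "(('a \<Rightarrow> nat) \<Rightarrow> real) \<Rightarrow> 'a set \<Rightarrow> ('a \<Rightarrow> nat) \<Rightarrow> ('a \<Rightarrow> nat) \<Rightarrow> bool" where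
  "raised f A u x \<longleftrightarrow> u \<le> x \<and> f u \<le> f x \<and> (\<forall>a. a \<notin> A \<longrightarrow> x a = u a)"

(* The only property of the greedy choice used in the analysis; unlike the tie-breaking
   in fds_step it is symmetric in the two sides. *)
definition greedy_update :: "(('a \<Rightarrow> nat) \<Rightarrow> real) \<Rightarrow> nat \<Rightarrow> real \<Rightarrow> 'a \<Rightarrow>
    ('a \<Rightarrow> nat) \<Rightarrow> ('a \<Rightarrow> nat) \<Rightarrow> ('a \<Rightarrow> nat) \<Rightarrow> ('a \<Rightarrow> nat) \<Rightarrow> bool" where
  "greedy_update f k \<alpha> e u u' v v' \<longleftrightarrow>
     u' = incr u e (dsel f k \<alpha> u e) \<or>
     u' = u \<and> f (incr u e (dsel f k \<alpha> u e)) - f u \<le> f v' - f v"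

lemma fds_step_greedy_update:
  assumes "fds_step f k \<alpha> e (u, v) = (u', v')"
  shows "greedy_update f k \<alpha> e u u' v v'" "greedy_update f k \<alpha> e v v' u u'"
  using assms unfolding fds_step_def greedy_update_def Let_def
  by (auto split: if_splits)

lemma raised_trans: "raised f A u x \<Longrightarrow> raised f B x z \<Longrightarrow> raised f (A \<union> B) u z"
  unfolding raised_def by (metis (no_types) Un_iff order.trans)

lemma supp_in_raised: "supp_in E u \<Longrightarrow> A \<subseteq> E \<Longrightarrow> raised f A u x \<Longrightarrow> supp_in E x"
  unfolding supp_in_def raised_def by auto

definition coordinate_gains :: "(('a \<Rightarrow> nat) \<Rightarrow> real) \<Rightarrow> ('a \<Rightarrow> nat) \<Rightarrow> 'a set \<Rightarrow> ('a \<Rightarrow> nat) \<Rightarrow> real" where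
  "coordinate_gains f v A x = (\<Sum>a\<in>A. f (incr x a (v a - x a)) - f x)"

context
  fixes E :: "'a set" and f :: "('a \<Rightarrow> nat) \<Rightarrow> real"
  assumes dr: "dr_submodular E f"
begin

lemma dr_submodular_incr:
  assumes "supp_in E u" "supp_in E w" "u \<le> w" "e \<in> E"
  shows "f (incr w e d) - f w \<le> f (incr u e d) - f u"
proof (induction d)
  case (Suc d)
  have "f (incr (incr w e d) e 1) - f (incr w e d) \<le> f (incr (incr u e d) e 1) - f (incr u e d)"
    using dr assms unfolding dr_submodular_def by (meson incr_mono supp_in_incr)
  with Suc.IH show ?case by simp
qed simp

lemma marginal_antimono:
  assumes "supp_in E u" "supp_in E w" "u \<le> w" "e \<in> E"
  shows "f (incr w e (Suc j)) - f (incr w e j) \<le> f (incr u e (Suc j)) - f (incr u e j)"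
  using dr_submodular_incr[of "incr u e j" "incr w e j" e 1] assms
  by (simp add: supp_in_incr incr_mono)

lemma marginal_antimono_level:
  assumes "supp_in E u" "e \<in> E" "i \<le> j"
  shows "f (incr u e (Suc j)) - f (incr u e j) \<le> f (incr u e (Suc i)) - f (incr u e i)"
proof -
  have "j - i + Suc i = Suc j" "j - i + i = j" using assms(3) by simp_all
  with marginal_antimono[of u "incr u e (j - i)" e i] assms(1,2) show ?thesis
    by (simp add: supp_in_incr le_incr)
qed

lemma join_gain_le_coordinate_gains:
  assumes "finite E" "supp_in E x" "supp_in E v"
  shows "f (vjoin v x) - f x \<le> coordinate_gains f v E x"
proof -
  define z where "z A = (\<lambda>a. if a \<in> A then max (v a) (x a) else x a)" for A
  have z_supp: "supp_in E (z A)" for A using assms by (auto simp: supp_in_def z_def)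
  have x_le_z: "x \<le> z A" for A by (auto simp: le_fun_def z_def)
  have "f (z A) - f x \<le> (\<Sum>a\<in>A. f (incr x a (v a - x a)) - f x)" if "A \<subseteq> E" for A
    using finite_subset[OF that assms(1)] that
  proof (induction A rule: finite_induct)
    case empty
    have "z {} = x" by (simp add: z_def fun_eq_iff)
    then show ?case by simp
  next
    case (insert a A)
    have "z (insert a A) = incr (z A) a (v a - x a)"
      using insert.hyps by (auto simp: z_def incr_def fun_eq_iff)
    moreover have "f (incr (z A) a (v a - x a)) - f (z A) \<le> f (incr x a (v a - x a)) - f x"
      by (rule dr_submodular_incr) (use assms z_supp x_le_z insert.prems in auto)
    ultimately show ?case using insert by simp
  qed
  moreover have "z E = vjoin v x" using assms by (auto simp: z_def vjoin_def fun_eq_iff supp_in_def)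
  ultimately show ?thesis by (fastforce simp: coordinate_gains_def)
qed

lemma dsel_marginal_ge:
  assumes "supp_in E u" "e \<in> E" "j < dsel f k \<alpha> u e"
  shows "f u / real k \<le> f (incr u e (Suc j)) - f (incr u e j)"
proof -
  let ?d = "dsel f k \<alpha> u e"
  have "f u / real k \<le> f (incr u e (Suc (?d - 1))) - f (incr u e (?d - 1))"
    using dsel_marginal[of f k \<alpha> u e] assms(3) by simp
  also have "\<dots> \<le> f (incr u e (Suc j)) - f (incr u e j)"
    by (rule marginal_antimono_level) (use assms in auto)
  finally show ?thesis .
qed

lemma marginal_beyond_dsel_le:
  assumes "supp_in E u" "supp_in E w" "u \<le> w" "e \<in> E"
    and "dsel f k \<alpha> u e \<le> j" "real (Suc j) \<le> \<alpha> * real k"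
  shows "f (incr w e (Suc j)) - f (incr w e j) \<le> f u / real k"
proof -
  have "f (incr u e (Suc j)) - f (incr u e j) < f u / real k"
    using dsel_maximal[of "Suc j" \<alpha> k f u e] assms(5,6) by fastforce
  with marginal_antimono[OF assms(1-4), of j] show ?thesis by linarith
qed

context
  assumes nonneg: "nonneg_on E f"
begin

lemma f_incr_le_dsel:
  assumes "supp_in E u" "e \<in> E" "m \<le> dsel f k \<alpha> u e"
  shows "f (incr u e m) \<le> f (incr u e (dsel f k \<alpha> u e))"
proof -
  have "0 \<le> f u / real k" using nonneg assms(1) by (simp add: nonneg_on_def)
  moreover have "real (dsel f k \<alpha> u e - m) * (f u / real k)
      \<le> f (incr u e (dsel f k \<alpha> u e)) - f (incr u e m)"
    by (rule diff_ge_of_increments_ge) (use assms dsel_marginal_ge in auto)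
  ultimately show ?thesis by (smt (verit) mult_nonneg_nonneg of_nat_0_le_iff)
qed

lemma scaled_gain_le:
  assumes "supp_in E u" "f u \<le> f x" "i \<le> n"
  shows "real i * (f u / real k) \<le> real n * f x / real k"
proof -
  have "0 \<le> f u" using nonneg assms(1) by (simp add: nonneg_on_def)
  then have "real i * f u \<le> real n * f x"
    using assms(2,3) by (intro mult_mono) auto
  then show ?thesis by (simp add: divide_right_mono)
qed

lemma gain_le_if_taken:
  assumes "supp_in E u" "supp_in E x" "u \<le> x" "e \<in> E" "u e = 0"
    and "x e = dsel f k \<alpha> u e" "f u \<le> f x" "real n \<le> \<alpha> * real k"
  shows "f (incr x e (n - x e)) - f x \<le> real n * f x / real k"
proof (cases "n \<le> x e")
  case True
  then show ?thesis
    using nonneg assms(2) by (simp add: nonneg_on_def)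
next
  case False
  let ?d = "dsel f k \<alpha> u e"
  define w where "w = x(e := 0)"
  have w: "supp_in E w" "u \<le> w" "x = incr w e ?d"
    using assms(2,3,5,6) by (auto simp: w_def supp_in_def le_fun_def incr_def)
  have "f (incr w e n) - f (incr w e ?d) \<le> real (n - ?d) * (f u / real k)"
  proof (rule diff_le_of_increments_le)
    fix j assume "?d \<le> j" "j < n"
    then show "f (incr w e (Suc j)) - f (incr w e j) \<le> f u / real k"
      using marginal_beyond_dsel_le[OF assms(1) w(1,2) assms(4)] assms(8) by simp
  qed (use False assms(6) in simp)
  also have "\<dots> \<le> real n * f x / real k"
    by (rule scaled_gain_le) (use assms in auto)
  finally show ?thesis
    using False assms(6) w(3) by simp
qed

lemma gain_le_if_passed:
  assumes "supp_in E u" "supp_in E x" "u \<le> x" "e \<in> E"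
    and "x e = 0" "f u \<le> f x" "real n \<le> \<alpha> * real k"
  shows "f (incr x e (n - x e)) - f x
    \<le> real n * f x / real k + (f (incr u e (dsel f k \<alpha> u e)) - f u)"
proof -
  let ?d = "dsel f k \<alpha> u e"
  define m where "m = min n ?d"
  have "f (incr x e m) - f x \<le> f (incr u e m) - f u"
    by (rule dr_submodular_incr[OF assms(1-4)])
  also have "\<dots> \<le> f (incr u e ?d) - f u"
    using f_incr_le_dsel[OF assms(1,4)] by (simp add: m_def)
  finally have head: "f (incr x e m) - f x \<le> f (incr u e ?d) - f u" .
  have "f (incr x e n) - f (incr x e m) \<le> real (n - m) * (f u / real k)"
  proof (rule diff_le_of_increments_le)
    fix j assume "m \<le> j" "j < n"
    then have "?d \<le> j" "real (Suc j) \<le> \<alpha> * real k"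
      using assms(7) by (auto simp: m_def)
    then show "f (incr x e (Suc j)) - f (incr x e j) \<le> f u / real k"
      by (rule marginal_beyond_dsel_le[OF assms(1,2,3,4)])
  qed (simp add: m_def)
  also have "\<dots> \<le> real n * f x / real k"
    by (rule scaled_gain_le) (use assms in auto)
  finally show ?thesis
    using head assms(5) by simp
qed

lemma greedy_update_raised:
  assumes "supp_in E u" "e \<in> E" "greedy_update f k \<alpha> e u u' v v'"
  shows "raised f {e} u u'"
  using assms(3) f_incr_le_dsel[OF assms(1,2), of 0]
  unfolding greedy_update_def raised_def by (auto simp: le_incr)

lemma fds_step_raised:
  assumes "fds_step f k \<alpha> e (u, v) = (u', v')" "supp_in E u" "supp_in E v" "e \<in> E"
  shows "raised f {e} u u'" "raised f {e} v v'"
  using greedy_update_raised fds_step_greedy_update[OF assms(1)] assms(2-4) by blast+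

lemma fold_fds_step_raised:
  assumes "fold (fds_step f k \<alpha>) L (u, v) = (x, y)" "set L \<subseteq> E" "supp_in E u" "supp_in E v"
  shows "raised f (set L) u x \<and> raised f (set L) v y"
  using assms
proof (induction L arbitrary: u v)
  case Nil
  then show ?case by (simp add: raised_def)
next
  case (Cons e L)
  obtain u' v' where step: "fds_step f k \<alpha> e (u, v) = (u', v')" by fastforce
  have head: "raised f {e} u u'" "raised f {e} v v'"
    using fds_step_raised[OF step] Cons.prems by auto
  have supp: "supp_in E u'" "supp_in E v'"
    using head Cons.prems(2-4) by (auto intro: supp_in_raised)
  have "raised f (set L) u' x \<and> raised f (set L) v' y"
    using Cons.IH[OF _ _ supp] Cons.prems(1,2) step by simp
  with head show ?case
    using raised_trans by fastforce
qed

lemma gain_le_after_update: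
  assumes "supp_in E u" "e \<in> E" "u e = 0" "supp_in E x" "raised f A u' x" "e \<notin> A"
    and "greedy_update f k \<alpha> e u u' v v'" "f v \<le> f v'" "real n \<le> \<alpha> * real k"
  shows "f (incr x e (n - x e)) - f x \<le> real n * f x / real k + (f v' - f v)"
  using assms(7) unfolding greedy_update_def
proof
  assume taken: "u' = incr u e (dsel f k \<alpha> u e)"
  have "u \<le> u'" "f u \<le> f u'"
    using taken le_incr f_incr_le_dsel[OF assms(1,2), of 0] by simp_all
  then have "u \<le> x" "x e = dsel f k \<alpha> u e" "f u \<le> f x"
    using assms(3,5,6) taken by (auto simp: raised_def intro: order_trans)
  then have "f (incr x e (n - x e)) - f x \<le> real n * f x / real k"
    using gain_le_if_taken[OF assms(1,4) _ assms(2,3) _ _ assms(9)] by simp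
  with assms(8) show ?thesis by simp
next
  assume "u' = u \<and> f (incr u e (dsel f k \<alpha> u e)) - f u \<le> f v' - f v"
  with gain_le_if_passed[OF assms(1,4) _ assms(2)] assms(3,5,6,9) show ?thesis
    by (fastforce simp: raised_def)
qed

lemma fds_step_gains_le:
  assumes "fds_step f k \<alpha> e (u, v) = (u', v')" "supp_in E u" "supp_in E v"
    and "e \<in> E" "e \<notin> A" "u e = 0" "v e = 0" "supp_in E x" "supp_in E y"
    and "raised f A u' x" "raised f A v' y" "real n \<le> \<alpha> * real k"
  shows "f (incr x e (n - x e)) - f x \<le> real n * f x / real k + (f v' - f v)"
    and "f (incr y e (n - y e)) - f y \<le> real n * f y / real k + (f u' - f u)"
proof -
  have "raised f {e} u u'" "raised f {e} v v'"
    using fds_step_raised[OF assms(1-4)] by auto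
  then have "f v \<le> f v'" "f u \<le> f u'"
    by (simp_all add: raised_def)
  then show "f (incr x e (n - x e)) - f x \<le> real n * f x / real k + (f v' - f v)"
    and "f (incr y e (n - y e)) - f y \<le> real n * f y / real k + (f u' - f u)"
    using gain_le_after_update[OF assms(2,4,6,8,10,5) fds_step_greedy_update(1)[OF assms(1)] _ assms(12)]
      gain_le_after_update[OF assms(3,4,7,9,11,5) fds_step_greedy_update(2)[OF assms(1)] _ assms(12)]
    by auto
qed

lemma fold_fds_step_gains_le:
  assumes "fold (fds_step f k \<alpha>) L (u, v) = (x, y)" "distinct L" "set L \<subseteq> E"
    and "supp_in E u" "supp_in E v" "\<forall>a\<in>set L. u a = 0 \<and> v a = 0"
    and "\<forall>a. real (ov a) \<le> \<alpha> * real k"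
  shows "coordinate_gains f ov (set L) x \<le> real (\<Sum>a\<in>set L. ov a) * f x / real k + (f y - f v)
       \<and> coordinate_gains f ov (set L) y \<le> real (\<Sum>a\<in>set L. ov a) * f y / real k + (f x - f u)"
  using assms(1-6)
proof (induction L arbitrary: u v)
  case Nil
  then show ?case by (simp add: coordinate_gains_def)
next
  case (Cons e L)
  obtain u' v' where step: "fds_step f k \<alpha> e (u, v) = (u', v')" by fastforce
  have tail: "fold (fds_step f k \<alpha>) L (u', v') = (x, y)"
    using Cons.prems(1) step by simp
  have e: "e \<in> E" "e \<notin> set L" "u e = 0" "v e = 0"
    using Cons.prems by auto
  have head: "raised f {e} u u'" "raised f {e} v v'"
    using fds_step_raised[OF step Cons.prems(4,5) e(1)] by auto
  have supp: "supp_in E u'" "supp_in E v'"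
    using supp_in_raised[OF Cons.prems(4) _ head(1)] supp_in_raised[OF Cons.prems(5) _ head(2)] e(1)
    by auto
  have "\<forall>a\<in>set L. u' a = 0 \<and> v' a = 0"
    using head Cons.prems(6) e(2) by (auto simp: raised_def)
  then have IH: "coordinate_gains f ov (set L) x \<le> real (\<Sum>a\<in>set L. ov a) * f x / real k + (f y - f v')"
      "coordinate_gains f ov (set L) y \<le> real (\<Sum>a\<in>set L. ov a) * f y / real k + (f x - f u')"
    using Cons.IH[OF tail _ _ supp] Cons.prems(2,3) by auto
  have rest: "raised f (set L) u' x" "raised f (set L) v' y"
    using fold_fds_step_raised[OF tail _ supp] Cons.prems(3) by auto
  have x_supp: "supp_in E x" "supp_in E y"
    using supp_in_raised[OF supp(1) _ rest(1)] supp_in_raised[OF supp(2) _ rest(2)] Cons.prems(3)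
    by auto
  have gains: "f (incr x e (ov e - x e)) - f x \<le> real (ov e) * f x / real k + (f v' - f v)"
      "f (incr y e (ov e - y e)) - f y \<le> real (ov e) * f y / real k + (f u' - f u)"
    using fds_step_gains_le[OF step Cons.prems(4,5) e x_supp rest] assms(7) by auto
  have gains_Cons: "coordinate_gains f ov (set (e # L)) z
      = (f (incr z e (ov e - z e)) - f z) + coordinate_gains f ov (set L) z" for z
    using e(2) by (simp add: coordinate_gains_def)
  have sum_Cons: "real (\<Sum>a\<in>set (e # L). ov a) * c / real k
      = real (ov e) * c / real k + real (\<Sum>a\<in>set L. ov a) * c / real k" for c
    using e(2) by (simp add: add_divide_distrib distrib_right)
  show ?case
    using gains IH gains_Cons[of x] gains_Cons[of y] sum_Cons[of "f x"] sum_Cons[of "f y"]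
    by linarith
qed

end

end

lemma fds_main_supp_in:
  assumes "nonneg_on (set es) f" "dr_submodular (set es) f" "fds_main f es k \<alpha> = (x, y)"
  shows "supp_in (set es) x" "supp_in (set es) y"
proof -
  have zero: "supp_in (set es) (\<lambda>_. 0)" by (simp add: supp_in_def)
  have "fold (fds_step f k \<alpha>) es (\<lambda>_. 0, \<lambda>_. 0) = (x, y)"
    using assms(3) by (simp add: fds_main_def)
  from fold_fds_step_raised[OF assms(2,1) this order_refl zero zero]
  show "supp_in (set es) x" "supp_in (set es) y"
    using supp_in_raised[OF zero order_refl] by auto
qed

lemma fds_main_join_gains_le:
  assumes "distinct es" "nonneg_on (set es) f" "dr_submodular (set es) f"
    and "fds_main f es k \<alpha> = (x, y)"
    and "supp_in (set es) v" "\<forall>a. real (v a) \<le> \<alpha> * real k"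
  shows "f (vjoin v x) - f x \<le> real (\<Sum>a\<in>set es. v a) * f x / real k + (f y - f (\<lambda>_. 0))"
    and "f (vjoin v y) - f y \<le> real (\<Sum>a\<in>set es. v a) * f y / real k + (f x - f (\<lambda>_. 0))"
proof -
  have zero: "supp_in (set es) (\<lambda>_. 0)" by (simp add: supp_in_def)
  have run: "fold (fds_step f k \<alpha>) es (\<lambda>_. 0, \<lambda>_. 0) = (x, y)"
    using assms(4) by (simp add: fds_main_def)
  note gains = fold_fds_step_gains_le[OF assms(3,2) run assms(1) order_refl zero zero _ assms(6)]
  note supp = fds_main_supp_in[OF assms(2-4)]
  show "f (vjoin v x) - f x \<le> real (\<Sum>a\<in>set es. v a) * f x / real k + (f y - f (\<lambda>_. 0))"
    using join_gain_le_coordinate_gains[OF assms(3) _ supp(1) assms(5)] gains by fastforce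
  show "f (vjoin v y) - f y \<le> real (\<Sum>a\<in>set es. v a) * f y / real k + (f x - f (\<lambda>_. 0))"
    using join_gain_le_coordinate_gains[OF assms(3) _ supp(2) assms(5)] gains by fastforce
qed

theorem lemma3:
  fixes f :: "('a \<Rightarrow> nat) \<Rightarrow> real" and es :: "'a list" and k :: nat and \<alpha> :: real
    and x y ov ov1 :: "'a \<Rightarrow> nat"
  assumes "distinct es"
    and "nonneg_on (set es) f"
    and "dr_submodular (set es) f"
    and "0 < k"
    and "0 < \<alpha>" and "\<alpha> < 1"
    and "fds_main f es k \<alpha> = (x, y)"
    and "is_opt (set es) f k ov"
    and "\<And>e. ov1 e = (if real (ov e) \<le> \<alpha> * real k then ov e else 0)"
  shows "f (vjoin ov1 x) + f (vjoin ov1 y) \<le> 4 * (f x + f y)"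
proof -
  let ?E = "set es"
  have ov: "supp_in ?E ov" "(\<Sum>a\<in>?E. ov a) \<le> k"
    using assms(8) by (auto simp: is_opt_def feasible_def)
  have ov1: "supp_in ?E ov1" "\<forall>a. real (ov1 a) \<le> \<alpha> * real k"
    using ov(1) assms(4,5,9) by (simp_all add: supp_in_def)
  have "(\<Sum>a\<in>?E. ov1 a) \<le> k"
    using ov(2) sum_mono[of ?E ov1 ov] assms(9) by fastforce
  then have scaled: "real (\<Sum>a\<in>?E. ov1 a) * c / real k \<le> c" if "0 \<le> c" for c
    using assms(4) mult_right_mono[OF of_nat_mono[OF \<open>(\<Sum>a\<in>?E. ov1 a) \<le> k\<close>] that]
    by (simp add: divide_le_eq mult.commute del: of_nat_sum)
  have nonneg: "0 \<le> f (\<lambda>_. 0)" "0 \<le> f x" "0 \<le> f y"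
    using assms(2) fds_main_supp_in[OF assms(2,3,7)] by (auto simp: nonneg_on_def supp_in_def)
  show ?thesis
    using fds_main_join_gains_le[OF assms(1,2,3,7) ov1] scaled[OF nonneg(2)] scaled[OF nonneg(3)] nonneg
    by argo
qed

end
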